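(* Let $A\in\mathbb{R}^{n\times n}$ be symmetric, $\beta>0$, $f(\mathbf{z})=\frac12\mathbf{z}^TA\mathbf{z}+\frac{\beta}{2}\sum_kz_k^4$ on $\mathbb{S}^{n-1}$, and let $\mathbf{z}\in\mathbb{S}^{n-1}$ be a stationary point, i.e. $[A+2\beta\,\mathrm{diag}(z_1^2,\dots,z_n^2)]\mathbf{z}=2\lambda\mathbf{z}$ with $2\lambda=\mathbf{z}^TA\mathbf{z}+2\beta\|\mathbf{z}\|_4^4$, such that $H=A+2\beta\,\mathrm{diag}(z_1^2,\dots,z_n^2)-2\lambda I$ is positive semidefinite. Then the KL exponent at $\mathbf{z}$ is at least $\frac14$: there exist $\delta,\eta>0$ such that $|f(\mathbf{y})-f(\mathbf{z})|^{3/4}\le\eta\|\mathrm{grad} f(\mathbf{y})\|$ for all $\mathbf{y}\in\mathbb{S}^{n-1}$ with $\|\mathbf{y}-\mathbf{z}\|<\delta$.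
   Context: $\mathbb{S}^{n-1}$ is the unit sphere in $\mathbb{R}^n$. For $\mathbf{y}\in\mathbb{S}^{n-1}$, $\mathrm{grad} f(\mathbf{y})=(I-\mathbf{y}\mathbf{y}^T)[A\mathbf{y}+2\beta\,\mathrm{diag}(y_1^2,\dots,y_n^2)\mathbf{y}]$ is the Riemannian gradient. *)

theory Defs
  imports "HOL-Analysis.Analysis"
begin

definition unit_sphere :: "(real^'n) set" where
  "unit_sphere = {y. norm y = 1}"

definition diag_sq :: "real^'n \<Rightarrow> real^'n^'n" where
  "diag_sq z = (\<chi> i j. if i = j then (z $ i)^2 else 0)"

definition quartic_obj :: "real^'n^'n \<Rightarrow> real \<Rightarrow> real^'n \<Rightarrow> real" where
  "quartic_obj A \<beta> z = (1/2) * (z \<bullet> (A *v z)) + (\<beta>/2) * (\<Sum>k\<in>UNIV. (z $ k)^4)"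

definition riem_grad :: "real^'n^'n \<Rightarrow> real \<Rightarrow> real^'n \<Rightarrow> real^'n" where
  "riem_grad A \<beta> y =
     (let g = A *v y + (2 * \<beta>) *\<^sub>R (diag_sq y *v y) in g - (y \<bullet> g) *\<^sub>R y)"

definition psd :: "real^'n^'n \<Rightarrow> bool" where
  "psd M \<longleftrightarrow> (\<forall>x. 0 \<le> x \<bullet> (M *v x))"

end

(* Write y = z + h and u_i = y_i^2 - z_i^2. Stationarity and |y| = |z| = 1 give the exact
   identity f(y) - f(z) = h^T H h / 2 + beta/2 |u|^2. Near z the coordinates of y and z have equal
   signs, so h_i^4 <= u_i^2 and |h|^4 <= n |u|^2 <= (2n/beta) (f(y) - f(z)).
   The gradient is paired with the test direction v = h - k/2, where k is the orthogonal projection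
   of the part of h on the zero set of z onto the kernel of H within that coordinate subspace. Then
   grad f(y) . v = h^T H h (1 - y . v) + beta (|u|^2 + error), and the error is O(delta) times
   h^T H h + |u|^2, because the remaining part of h on the zero set is controlled by H, which is
   bounded below on the orthogonal complement of that kernel. Hence
   f(y) - f(z) <= grad f(y) . v <= 2 |h| |grad f(y)| <= 2 ((2n/beta) (f(y) - f(z)))^(1/4) |grad f(y)|. *)

theory Submission
  imports Defs
begin

lemma norm_power2_eq_sum_cart: "norm (x :: real^'n) ^ 2 = (\<Sum>i\<in>UNIV. (x$i)^2)"
  by (simp only: power2_norm_eq_inner) (simp add: inner_vec_def power2_eq_square)

lemma inner_mult_vec_symmetric:
  fixes M :: "real^'n^'n"
  assumes "transpose M = M"
  shows "x \<bullet> (M *v y) = (M *v x) \<bullet> y"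
  by (metis assms dot_lmul_matrix transpose_matrix_vector)

lemma diag_sq_mult_vec_nth: "(diag_sq z *v x) $ i = (z$i)^2 * x$i"
  by (simp add: diag_sq_def matrix_vector_mult_def mult_delta_left)

lemma psd_norm_mult_vec_power2_le:
  fixes M :: "real^'n^'n"
  assumes sym: "transpose M = M" and "psd M" and bound: "\<And>x. norm (M *v x) \<le> L * norm x"
  shows "norm (M *v x)^2 \<le> L * (x \<bullet> (M *v x))"
proof (cases "L > 0")
  case False
  then have "L * norm x \<le> 0"
    by (simp add: mult_nonpos_nonneg)
  then have "norm (M *v x) \<le> 0"
    using bound[of x] by linarith
  then show ?thesis by simp
next
  case True
  define w where "w = M *v x"
  have wMw: "w \<bullet> (M *v w) \<le> L * (w \<bullet> w)"
  proof -
    have "w \<bullet> (M *v w) \<le> norm w * (L * norm w)"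
      using norm_cauchy_schwarz[of w "M *v w"] mult_left_mono[OF bound[of w] norm_ge_zero[of w]]
      by linarith
    then show ?thesis by (simp add: power2_norm_eq_inner[symmetric] power2_eq_square algebra_simps)
  qed
  have "0 \<le> (x - (1/L) *\<^sub>R w) \<bullet> (M *v (x - (1/L) *\<^sub>R w))"
    using \<open>psd M\<close> by (simp add: psd_def)
  also have "\<dots> = x \<bullet> w - (2/L) * (w \<bullet> w) + (1/L)^2 * (w \<bullet> (M *v w))"
    using inner_mult_vec_symmetric[OF sym, of x w] True
    by (simp add: matrix_vector_mult_diff_distrib matrix_vector_mult_scaleR inner_diff_left
        inner_diff_right power2_eq_square inner_commute flip: w_def) (simp add: field_simps)
  also have "\<dots> \<le> x \<bullet> w - (1/L) * (w \<bullet> w)"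
    using mult_left_mono[OF wMw, of "(1/L)^2"] True by (simp add: power2_eq_square)
  finally have "w \<bullet> w \<le> L * (x \<bullet> w)"
    using True by (simp add: field_simps)
  then show ?thesis
    by (simp add: w_def power2_norm_eq_inner)
qed

lemma linear_bounded_below_on_kernel_complement:
  fixes f :: "'a::euclidean_space \<Rightarrow> 'b::euclidean_space"
  assumes "linear f" and "subspace V"
  obtains c where "c > 0"
    and "\<And>x. x \<in> V \<Longrightarrow> (\<And>w. w \<in> V \<Longrightarrow> f w = 0 \<Longrightarrow> x \<bullet> w = 0) \<Longrightarrow> c * norm x \<le> norm (f x)"
proof -
  define T where "T = {x \<in> V. \<forall>w\<in>V. f w = 0 \<longrightarrow> x \<bullet> w = 0}"
  have "subspace T"
    using \<open>subspace V\<close> unfolding T_def subspace_def by (auto simp: inner_add_left)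
  moreover have "\<forall>x\<in>T. f x = 0 \<longrightarrow> x = 0"
    unfolding T_def by auto
  moreover have "bounded_linear f"
    using \<open>linear f\<close> by (simp add: linear_conv_bounded_linear)
  ultimately obtain c where "c > 0" "\<forall>x\<in>T. c * norm x \<le> norm (f x)"
    using injective_imp_isometric[OF closed_subspace] by blast
  then show thesis
    using that unfolding T_def by auto
qed

lemma mult_nonneg_if_abs_diff_le:
  fixes a b :: real
  assumes "\<bar>a - b\<bar> \<le> \<bar>b\<bar>"
  shows "0 \<le> a * b"
proof -
  have "\<bar>a * b - b * b\<bar> = \<bar>a - b\<bar> * \<bar>b\<bar>"
    by (simp add: left_diff_distrib flip: abs_mult)
  also have "\<dots> \<le> b * b"
    using mult_right_mono[OF assms abs_ge_zero[of b]] by simp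
  finally have "\<bar>a * b - b * b\<bar> \<le> b * b" .
  then show ?thesis by (simp add: abs_le_iff)
qed

lemma abs_mult_diff_le_abs_diff_squares:
  fixes a b :: real
  assumes "0 \<le> a * b"
  shows "\<bar>b\<bar> * \<bar>a - b\<bar> \<le> \<bar>a^2 - b^2\<bar>"
proof -
  have "\<bar>b\<bar> \<le> \<bar>a + b\<bar>"
    using assms by (simp add: abs_le_square_iff power2_eq_square algebra_simps)
  then have "\<bar>b\<bar> * \<bar>a - b\<bar> \<le> \<bar>a + b\<bar> * \<bar>a - b\<bar>"
    by (rule mult_right_mono) simp
  also have "\<dots> = \<bar>a^2 - b^2\<bar>"
    by (simp add: power2_eq_square algebra_simps flip: abs_mult)
  finally show ?thesis .
qed

lemma diff_power4_le_diff_squares_power2: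
  fixes a b :: real
  assumes "0 \<le> a * b"
  shows "(a - b)^4 \<le> (a^2 - b^2)^2"
proof -
  have "(a^2 - b^2)^2 - (a - b)^4 = (a - b)^2 * (4 * (a * b))"
    by (simp add: algebra_simps power2_eq_square power4_eq_xxxx)
  also have "\<dots> \<ge> 0" using assms by simp
  finally show ?thesis by simp
qed

lemma abs_diff_squares_le:
  fixes a b :: real
  assumes "\<bar>a\<bar> \<le> 1" and "\<bar>b\<bar> \<le> 1"
  shows "\<bar>a^2 - b^2\<bar> \<le> 2 * \<bar>a - b\<bar>"
proof -
  have "\<bar>a^2 - b^2\<bar> = \<bar>a - b\<bar> * \<bar>a + b\<bar>"
    by (simp add: power2_eq_square algebra_simps flip: abs_mult)
  also have "\<dots> \<le> \<bar>a - b\<bar> * 2"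
    using assms by (intro mult_left_mono) auto
  finally show ?thesis by simp
qed

lemma powr_three_quarters_le:
  fixes F a g B :: real
  assumes "0 \<le> F" and "0 \<le> g" and "F \<le> a * g" and "a^4 \<le> B * F"
  shows "F powr (3/4) \<le> B powr (1/4) * g"
proof (cases "F = 0")
  case True
  then show ?thesis using \<open>0 \<le> g\<close> by simp
next
  case False
  then have "F > 0" using \<open>0 \<le> F\<close> by simp
  have "0 \<le> a^4"
    by simp
  then have "0 \<le> B * F"
    using \<open>a^4 \<le> B * F\<close> by linarith
  then have "B \<ge> 0"
    using \<open>F > 0\<close> by (simp add: zero_le_mult_iff)
  show ?thesis
  proof (cases "a \<le> 0")
    case True
    then have "F \<le> 0"
      using \<open>F \<le> a * g\<close> mult_nonpos_nonneg[OF True \<open>0 \<le> g\<close>] by linarith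
    then show ?thesis using \<open>F > 0\<close> by simp
  next
    case False
    have "a = a powr (4 * (1/4))"
      using False by simp
    also have "\<dots> = (a powr 4) powr (1/4)"
      by (rule powr_powr[symmetric])
    also have "\<dots> = (a^4) powr (1/4)"
      using False by simp
    also have "\<dots> \<le> (B * F) powr (1/4)"
      using \<open>a^4 \<le> B * F\<close> by (intro powr_mono2) auto
    also have "\<dots> = B powr (1/4) * F powr (1/4)"
      using \<open>B \<ge> 0\<close> \<open>F > 0\<close> by (simp add: powr_mult)
    finally have a_le: "a \<le> B powr (1/4) * F powr (1/4)" .
    have "F powr (3/4) * F powr (1/4) = F"
      using \<open>F > 0\<close> by (simp add: powr_add[symmetric])
    also have "\<dots> \<le> a * g" by fact
    also have "\<dots> \<le> (B powr (1/4) * g) * F powr (1/4)"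
      using mult_right_mono[OF a_le \<open>0 \<le> g\<close>] by (simp add: algebra_simps)
    finally show ?thesis
      using \<open>F > 0\<close> by simp
  qed
qed

locale quartic_stationary =
  fixes A :: "real^'n^'n" and \<beta> lam :: real and z :: "real^'n"
  assumes symmetric: "transpose A = A"
    and beta_pos: "\<beta> > 0"
    and z_sphere: "z \<in> unit_sphere"
    and stationary: "(A + (2 * \<beta>) *\<^sub>R diag_sq z) *v z = (2 * lam) *\<^sub>R z"
    and second_order: "psd (A + (2 * \<beta>) *\<^sub>R diag_sq z - (2 * lam) *\<^sub>R mat 1)"
begin

definition hess :: "real^'n^'n" where
  "hess = A + (2 * \<beta>) *\<^sub>R diag_sq z - (2 * lam) *\<^sub>R mat 1"

lemma hess_mult_vec_nth: "(hess *v x) $ i = (A *v x) $ i + (2 * \<beta> * (z$i)^2 - 2 * lam) * x$i"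
  by (simp add: hess_def diag_sq_mult_vec_nth algebra_simps flip: scaleR_matrix_vector_assoc)

lemma A_mult_z_nth: "(A *v z) $ i = 2 * lam * z$i - 2 * \<beta> * (z$i)^3"
proof -
  have "(A *v z) $ i + 2 * \<beta> * ((z$i)^2 * z$i) = 2 * lam * z$i"
    using arg_cong[OF stationary, of "\<lambda>x. x $ i"]
    by (simp add: matrix_vector_mult_add_rdistrib diag_sq_mult_vec_nth
        flip: scaleR_matrix_vector_assoc)
  then show ?thesis by (simp add: power2_eq_square power3_eq_cube algebra_simps)
qed

lemma hess_mult_z: "hess *v z = 0"
  by (simp add: vec_eq_iff hess_mult_vec_nth A_mult_z_nth power2_eq_square power3_eq_cube algebra_simps)

lemma hess_symmetric: "transpose hess = hess"
proof -
  have "A $ j $ i = A $ i $ j" for i j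
    using symmetric by (metis transpose_def vec_lambda_beta)
  then show ?thesis
    by (simp add: hess_def vec_eq_iff transpose_def diag_sq_def mat_def)
qed

lemma hess_self_adjoint: "x \<bullet> (hess *v y) = (hess *v x) \<bullet> y"
  using hess_symmetric by (rule inner_mult_vec_symmetric)

lemma hess_psd: "psd hess"
  using second_order by (simp add: hess_def)

lemma hess_nonneg: "0 \<le> x \<bullet> (hess *v x)"
  using hess_psd by (simp add: psd_def)

lemma sum_z_power2: "(\<Sum>i\<in>UNIV. (z$i)^2) = 1"
  using z_sphere by (simp add: unit_sphere_def flip: norm_power2_eq_sum_cart)

lemma quartic_obj_diff:
  assumes "y \<in> unit_sphere"
  shows "quartic_obj A \<beta> y - quartic_obj A \<beta> z
    = ((y - z) \<bullet> (hess *v (y - z))) / 2 + \<beta> / 2 * (\<Sum>i\<in>UNIV. ((y$i)^2 - (z$i)^2)^2)"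
proof -
  have y1: "(\<Sum>i\<in>UNIV. (y$i)^2) = 1"
    using assms by (simp add: unit_sphere_def flip: norm_power2_eq_sum_cart)
  have "(y - z) \<bullet> (hess *v (y - z)) = y \<bullet> (hess *v y)"
    using hess_self_adjoint[of z y]
    by (simp add: hess_mult_z matrix_vector_mult_diff_distrib inner_diff_left inner_diff_right)
  also have "\<dots> = y \<bullet> (A *v y) + 2 * \<beta> * (\<Sum>i\<in>UNIV. (z$i)^2 * (y$i)^2)
      - 2 * lam * (\<Sum>i\<in>UNIV. (y$i)^2)"
    by (simp add: inner_vec_def hess_mult_vec_nth sum.distrib sum_distrib_left algebra_simps
        power2_eq_square sum_subtractf)
  finally have quad: "(y - z) \<bullet> (hess *v (y - z))
      = y \<bullet> (A *v y) + 2 * \<beta> * (\<Sum>i\<in>UNIV. (z$i)^2 * (y$i)^2) - 2 * lam"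
    by (simp add: y1)
  have "z \<bullet> (A *v z) = 2 * lam * (\<Sum>i\<in>UNIV. (z$i)^2) - 2 * \<beta> * (\<Sum>i\<in>UNIV. (z$i)^4)"
    by (simp add: inner_vec_def A_mult_z_nth sum_subtractf sum_distrib_left algebra_simps
        power2_eq_square power3_eq_cube power4_eq_xxxx)
  moreover have "\<beta> / 2 * (\<Sum>i\<in>UNIV. ((y$i)^2 - (z$i)^2)^2)
      = \<beta> / 2 * (\<Sum>i\<in>UNIV. (y$i)^4) - \<beta> * (\<Sum>i\<in>UNIV. (z$i)^2 * (y$i)^2)
        + \<beta> / 2 * (\<Sum>i\<in>UNIV. (z$i)^4)"
    by (simp add: power2_eq_square power4_eq_xxxx algebra_simps sum.distrib sum_subtractf
        sum_distrib_left)
  ultimately show ?thesis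
    unfolding quartic_obj_def quad by (simp add: sum_z_power2 field_simps)
qed

lemma riem_grad_eq:
  assumes "y \<in> unit_sphere"
    and r: "r = hess *v (y - z) + (2 * \<beta>) *\<^sub>R (\<chi> i. y$i * ((y$i)^2 - (z$i)^2))"
  shows "riem_grad A \<beta> y = r - (y \<bullet> r) *\<^sub>R y"
proof -
  have "A *v y + (2 * \<beta>) *\<^sub>R (diag_sq y *v y) = r + (2 * lam) *\<^sub>R y"
    by (simp add: vec_eq_iff r hess_mult_vec_nth A_mult_z_nth diag_sq_mult_vec_nth
        power2_eq_square power3_eq_cube algebra_simps)
  moreover have "y \<bullet> y = 1"
    using assms(1) by (simp add: unit_sphere_def flip: power2_norm_eq_inner)
  ultimately show ?thesis
    by (simp add: riem_grad_def algebra_simps)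
qed

definition zmin :: real where
  "zmin = Min ((\<lambda>i. \<bar>z$i\<bar>) ` {i. z$i \<noteq> 0})"

lemma zmin_le: "z$i \<noteq> 0 \<Longrightarrow> zmin \<le> \<bar>z$i\<bar>"
  unfolding zmin_def by (rule Min_le) auto

lemma zmin_pos: "zmin > 0"
proof -
  have "z \<noteq> 0"
    using z_sphere by (auto simp: unit_sphere_def)
  then have "{i. z$i \<noteq> 0} \<noteq> {}"
    by (auto simp: vec_eq_iff)
  then have "zmin \<in> (\<lambda>i. \<bar>z$i\<bar>) ` {i. z$i \<noteq> 0}"
    unfolding zmin_def by (intro Min_in) auto
  then show ?thesis by auto
qed

definition off_support :: "(real^'n) set" where
  "off_support = {x. \<forall>i. z$i \<noteq> 0 \<longrightarrow> x$i = 0}"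

definition off_support_kernel :: "(real^'n) set" where
  "off_support_kernel = {x \<in> off_support. hess *v x = 0}"

lemma subspace_off_support: "subspace off_support"
  by (simp add: subspace_def off_support_def)

lemma subspace_off_support_kernel: "subspace off_support_kernel"
  by (simp add: subspace_def off_support_kernel_def off_support_def
      matrix_vector_right_distrib matrix_vector_mult_scaleR)

definition hess_norm :: real where
  "hess_norm = onorm ((*v) hess)"

lemma hess_norm_nonneg: "0 \<le> hess_norm"
  by (simp add: hess_norm_def onorm_pos_le)

lemma norm_hess_mult_le: "norm (hess *v x) \<le> hess_norm * norm x"
  by (simp add: hess_norm_def onorm)

lemma norm_hess_mult_power2_le: "norm (hess *v x)^2 \<le> hess_norm * (x \<bullet> (hess *v x))"
  using hess_symmetric hess_psd norm_hess_mult_le by (rule psd_norm_mult_vec_power2_le)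

definition hess_lower :: real where
  "hess_lower = (SOME c. c > 0 \<and> (\<forall>x\<in>off_support.
     (\<forall>w\<in>off_support_kernel. x \<bullet> w = 0) \<longrightarrow> c * norm x \<le> norm (hess *v x)))"

lemma hess_lower:
  "hess_lower > 0"
  "\<And>x. x \<in> off_support \<Longrightarrow> (\<And>w. w \<in> off_support_kernel \<Longrightarrow> x \<bullet> w = 0)
     \<Longrightarrow> hess_lower * norm x \<le> norm (hess *v x)"
proof -
  obtain c where "c > 0" "\<And>x. x \<in> off_support \<Longrightarrow>
      (\<And>w. w \<in> off_support \<Longrightarrow> hess *v w = 0 \<Longrightarrow> x \<bullet> w = 0) \<Longrightarrow> c * norm x \<le> norm (hess *v x)"
    using linear_bounded_below_on_kernel_complement[OF matrix_vector_mul_linear subspace_off_support]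
    by blast
  then have "\<exists>c. c > 0 \<and> (\<forall>x\<in>off_support.
      (\<forall>w\<in>off_support_kernel. x \<bullet> w = 0) \<longrightarrow> c * norm x \<le> norm (hess *v x))"
    by (auto simp: off_support_kernel_def)
  from someI_ex[OF this] show "hess_lower > 0"
    and "\<And>x. x \<in> off_support \<Longrightarrow> (\<And>w. w \<in> off_support_kernel \<Longrightarrow> x \<bullet> w = 0)
      \<Longrightarrow> hess_lower * norm x \<le> norm (hess *v x)"
    unfolding hess_lower_def by auto
qed

text \<open>delta * err_const bounds the error in the pairing of the gradient with the test direction,
  relative to h^T H h + |u|^2.\<close>

definition err_const :: real where
  "err_const = (4 / zmin^2 + 1)
     * (1 + 2 * hess_norm / hess_lower^2 + 2 * hess_norm^2 / (hess_lower * zmin)^2)"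

lemma err_const_nonneg: "0 \<le> err_const"
  using hess_norm_nonneg by (simp add: err_const_def)

lemma exists_nbhd_radius:
  obtains \<delta> where "\<delta> > 0" "\<delta> \<le> zmin / 2" "\<delta> * (2 + (1 + \<beta>) * err_const) \<le> 1 / 2"
proof
  define d where "d = 4 + 2 * (1 + \<beta>) * err_const"
  have "0 \<le> 2 * (1 + \<beta>) * err_const"
    using err_const_nonneg beta_pos by simp
  then have "d > 0"
    by (simp add: d_def)
  then show "min (zmin / 2) (1 / d) > 0"
    using zmin_pos by simp
  show "min (zmin / 2) (1 / d) \<le> zmin / 2"
    by simp
  have "min (zmin / 2) (1 / d) * d \<le> 1"
    using \<open>d > 0\<close> by (simp add: min_def pos_le_divide_eq)
  then show "min (zmin / 2) (1 / d) * (2 + (1 + \<beta>) * err_const) \<le> 1 / 2"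
    by (simp add: d_def algebra_simps)
qed

end

locale quartic_stationary_nbhd = quartic_stationary A \<beta> lam z
  for A :: "real^'n^'n" and \<beta> lam :: real and z :: "real^'n" +
  fixes \<delta> :: real and y :: "real^'n"
  assumes y_sphere: "y \<in> unit_sphere"
    and close: "norm (y - z) < \<delta>"
    and delta_le_zmin: "\<delta> \<le> zmin / 2"
    and delta_small: "\<delta> * (2 + (1 + \<beta>) * err_const) \<le> 1 / 2"
begin

definition h :: "real^'n" where
  "h = y - z"

definition u :: "real^'n" where
  "u = (\<chi> i. (y$i)^2 - (z$i)^2)"

definition hess_quad :: real where
  "hess_quad = h \<bullet> (hess *v h)"

definition u_wmean :: real where
  "u_wmean = (\<Sum>i\<in>UNIV. (y$i)^2 * u$i)"

definition h_off :: "real^'n" where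
  "h_off = (\<chi> i. if z$i = 0 then h$i else 0)"

definition h_ker :: "real^'n" where
  "h_ker = (SOME k. k \<in> off_support_kernel \<and> (\<forall>w\<in>off_support_kernel. (h_off - k) \<bullet> w = 0))"

definition h_perp :: "real^'n" where
  "h_perp = h_off - h_ker"

text \<open>On the zero set of z the correction -h_ker/2 gives 2 y_i v_i = u_i + h_i (h_perp)_i, while
  h_ker lies in the kernel of hess and so does not change the pairing of hess *v h with v.\<close>

definition test_dir :: "real^'n" where
  "test_dir = h - (1/2) *\<^sub>R h_ker"

lemma y_nth: "y$i = z$i + h$i"
  by (simp add: h_def)

lemma norm_h_less: "norm h < \<delta>"
  using close by (simp add: h_def)

lemma delta_pos: "0 < \<delta>"
  using norm_h_less norm_ge_zero[of h] by linarith

lemma abs_h_nth_less: "\<bar>h$i\<bar> < \<delta>"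
  using component_le_norm_cart[of h i] norm_h_less by linarith

lemma sum_y_power2: "(\<Sum>i\<in>UNIV. (y$i)^2) = 1"
  using y_sphere by (simp add: unit_sphere_def flip: norm_power2_eq_sum_cart)

lemma y_z_nth_nonneg: "0 \<le> y$i * z$i"
proof (cases "z$i = 0")
  case False
  have "\<bar>y$i - z$i\<bar> \<le> \<bar>z$i\<bar>"
    using abs_h_nth_less[of i] delta_le_zmin zmin_le[OF False] zmin_pos by (simp add: h_def)
  then show ?thesis by (rule mult_nonneg_if_abs_diff_le)
qed simp

lemma abs_u_nth_le: "\<bar>u$i\<bar> \<le> 2 * \<bar>h$i\<bar>"
proof -
  have "\<bar>y$i\<bar> \<le> 1" "\<bar>z$i\<bar> \<le> 1"
    using component_le_norm_cart[of y i] component_le_norm_cart[of z i] y_sphere z_sphere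
    by (auto simp: unit_sphere_def)
  then show ?thesis
    using abs_diff_squares_le by (simp add: u_def h_def)
qed

lemma zmin_abs_h_nth_le:
  assumes "z$i \<noteq> 0"
  shows "zmin * \<bar>h$i\<bar> \<le> \<bar>u$i\<bar>"
proof -
  have "zmin * \<bar>h$i\<bar> \<le> \<bar>z$i\<bar> * \<bar>y$i - z$i\<bar>"
    using mult_right_mono[OF zmin_le[OF assms] abs_ge_zero[of "h$i"]] by (simp add: h_def)
  also have "\<dots> \<le> \<bar>u$i\<bar>"
    using abs_mult_diff_le_abs_diff_squares[OF y_z_nth_nonneg] by (simp add: u_def)
  finally show ?thesis .
qed

lemma sum_u: "(\<Sum>i\<in>UNIV. u$i) = 0"
  by (simp add: u_def sum_subtractf sum_y_power2 sum_z_power2)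

lemma norm_u_le: "norm u \<le> 2 * norm h"
proof (rule power2_le_imp_le)
  have "(u$i)^2 \<le> 2^2 * (h$i)^2" for i
    using power_mono[OF abs_u_nth_le[of i], of 2] by (simp add: power_mult_distrib)
  then show "norm u ^ 2 \<le> (2 * norm h)^2"
    unfolding norm_power2_eq_sum_cart power_mult_distrib sum_distrib_left by (rule sum_mono)
qed simp

lemma abs_u_wmean_le: "\<bar>u_wmean\<bar> \<le> norm u"
proof -
  have "\<bar>u_wmean\<bar> \<le> (\<Sum>i\<in>UNIV. (y$i)^2 * \<bar>u$i\<bar>)"
    unfolding u_wmean_def using sum_abs by (metis (no_types, lifting) abs_mult abs_power2 sum.cong)
  also have "\<dots> \<le> (\<Sum>i\<in>UNIV. (y$i)^2 * norm u)"
    by (intro sum_mono mult_left_mono component_le_norm_cart) simp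
  also have "\<dots> = norm u"
    by (simp add: sum_y_power2 flip: sum_distrib_right)
  finally show ?thesis .
qed

lemma norm_h_power4_le: "norm h ^ 4 \<le> CARD('n) * norm u ^ 2"
proof -
  have "norm h ^ 4 = (norm h ^ 2)^2"
    by (simp flip: power_mult)
  also have "\<dots> = (\<Sum>i\<in>UNIV. (h$i)^2)^2"
    by (simp only: norm_power2_eq_sum_cart)
  also have "\<dots> \<le> (\<Sum>i\<in>UNIV. ((h$i)^2)^2) * CARD('n)"
    by (rule sum_squared_le_sum_of_squares)
  also have "\<dots> \<le> (\<Sum>i\<in>UNIV. (u$i)^2) * CARD('n)"
    using diff_power4_le_diff_squares_power2[OF y_z_nth_nonneg]
    by (intro mult_right_mono sum_mono) (simp_all add: h_def u_def flip: power_mult)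
  finally show ?thesis
    by (simp add: norm_power2_eq_sum_cart mult.commute)
qed

lemma h_ker_orthogonal_decomp:
  "h_ker \<in> off_support_kernel" "w \<in> off_support_kernel \<Longrightarrow> h_perp \<bullet> w = 0"
proof -
  have span: "span off_support_kernel = off_support_kernel"
    using subspace_off_support_kernel by simp
  obtain k p where "k \<in> off_support_kernel" "\<And>w. w \<in> off_support_kernel \<Longrightarrow> p \<bullet> w = 0"
      "h_off = k + p"
    using orthogonal_subspace_decomp_exists[of off_support_kernel h_off]
    unfolding span orthogonal_def by blast
  then have "\<exists>k. k \<in> off_support_kernel \<and> (\<forall>w\<in>off_support_kernel. (h_off - k) \<bullet> w = 0)"
    by (intro exI[of _ k]) auto
  from someI_ex[OF this] show "h_ker \<in> off_support_kernel"
    and "w \<in> off_support_kernel \<Longrightarrow> h_perp \<bullet> w = 0"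
    unfolding h_ker_def h_perp_def by auto
qed

lemma hess_mult_h_ker: "hess *v h_ker = 0"
  using h_ker_orthogonal_decomp(1) by (simp add: off_support_kernel_def)

lemma h_ker_nth: "z$i \<noteq> 0 \<Longrightarrow> h_ker$i = 0"
  using h_ker_orthogonal_decomp(1) by (simp add: off_support_kernel_def off_support_def)

lemma h_perp_off_support: "h_perp \<in> off_support"
  by (simp add: off_support_def h_perp_def h_off_def h_ker_nth)

lemma norm_h_ker_le: "norm h_ker \<le> norm h"
proof (rule power2_le_imp_le)
  have "h_perp \<bullet> h_ker = 0"
    using h_ker_orthogonal_decomp by blast
  then have "norm h_off ^ 2 = norm h_ker ^ 2 + norm h_perp ^ 2"
    by (simp add: h_perp_def power2_norm_eq_inner inner_diff_left inner_diff_right inner_commute)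
  moreover have "norm h_off ^ 2 \<le> norm h ^ 2"
    unfolding norm_power2_eq_sum_cart by (intro sum_mono) (simp add: h_off_def)
  ultimately show "norm h_ker ^ 2 \<le> norm h ^ 2"
    using zero_le_power2[of "norm h_perp"] by linarith
qed simp

lemma norm_test_dir_le: "norm test_dir \<le> 2 * norm h"
proof -
  have "norm test_dir \<le> norm h + norm h_ker / 2"
    using norm_triangle_ineq4[of h "(1/2) *\<^sub>R h_ker"] by (simp add: test_dir_def)
  then show ?thesis
    using norm_h_ker_le norm_ge_zero[of h] by linarith
qed

lemma quartic_gap_eq:
  "quartic_obj A \<beta> y - quartic_obj A \<beta> z = hess_quad / 2 + \<beta> / 2 * norm u ^ 2"
  using quartic_obj_diff[OF y_sphere] by (simp add: hess_quad_def h_def u_def norm_power2_eq_sum_cart)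

lemma zmin_norm_on_support_le: "zmin * norm (h - h_off) \<le> norm u"
proof (rule power2_le_imp_le)
  have "zmin^2 * ((h - h_off)$i)^2 \<le> (u$i)^2" for i
  proof (cases "z$i = 0")
    case False
    then show ?thesis
      using power_mono[OF zmin_abs_h_nth_le[OF False], of 2] zmin_pos
      by (simp add: h_off_def power_mult_distrib)
  qed (simp add: h_off_def)
  then show "(zmin * norm (h - h_off))^2 \<le> norm u ^ 2"
    unfolding power_mult_distrib norm_power2_eq_sum_cart sum_distrib_left by (rule sum_mono)
qed simp

lemma norm_h_perp_power2_le:
  "norm h_perp ^ 2 \<le> 2 * hess_norm / hess_lower^2 * hess_quad
     + 2 * hess_norm^2 / (hess_lower * zmin)^2 * norm u ^ 2"
proof -
  define p where "p = h - h_off"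
  have norm_p: "norm p \<le> norm u / zmin"
    using zmin_norm_on_support_le zmin_pos by (simp add: p_def pos_le_divide_eq mult.commute)
  have "hess *v h_perp = hess *v h - hess *v p"
    by (simp add: h_perp_def p_def matrix_vector_mult_diff_distrib hess_mult_h_ker)
  then have "hess_lower * norm h_perp \<le> norm (hess *v h) + hess_norm * norm p"
    using hess_lower(2)[OF h_perp_off_support h_ker_orthogonal_decomp(2)]
      norm_triangle_ineq4[of "hess *v h" "hess *v p"] norm_hess_mult_le[of p]
    by simp
  then have "(hess_lower * norm h_perp)^2 \<le> (norm (hess *v h) + hess_norm * norm p)^2"
    using hess_lower(1) by (intro power_mono) auto
  also have "\<dots> \<le> 2 * norm (hess *v h)^2 + 2 * (hess_norm * norm p)^2"
    using sum_squares_bound[of "norm (hess *v h)" "hess_norm * norm p"] by (simp add: power2_sum)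
  also have "\<dots> \<le> 2 * (hess_norm * hess_quad) + 2 * (hess_norm * (norm u / zmin))^2"
    using norm_hess_mult_power2_le[of h] norm_p hess_norm_nonneg
    by (intro add_mono mult_left_mono power_mono) (auto simp: hess_quad_def)
  finally have "hess_lower^2 * norm h_perp ^ 2
      \<le> 2 * hess_norm * hess_quad + 2 * hess_norm^2 * norm u ^ 2 / zmin^2"
    by (simp add: power_mult_distrib power_divide)
  then show ?thesis
    using hess_lower(1) zmin_pos by (simp add: field_simps)
qed

lemma riem_grad_inner_test_dir:
  "riem_grad A \<beta> y \<bullet> test_dir
     = hess_quad * (1 - y \<bullet> test_dir) + \<beta> * (\<Sum>i\<in>UNIV. 2 * y$i * test_dir$i * (u$i - u_wmean))"
proof -
  define r where "r = hess *v h + (2 * \<beta>) *\<^sub>R (\<chi> i. y$i * u$i)"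
  have grad: "riem_grad A \<beta> y = r - (y \<bullet> r) *\<^sub>R y"
    using y_sphere by (rule riem_grad_eq) (simp add: r_def h_def u_def)
  have "(hess *v h) \<bullet> h_ker = 0"
    using hess_self_adjoint[of h_ker h] hess_mult_h_ker by (simp add: inner_commute)
  then have "(hess *v h) \<bullet> test_dir = hess_quad"
    by (simp add: test_dir_def hess_quad_def inner_diff_right inner_commute)
  moreover have "(\<chi> i. y$i * u$i) \<bullet> test_dir = (\<Sum>i\<in>UNIV. y$i * u$i * test_dir$i)"
    by (simp add: inner_vec_def)
  ultimately have r_test: "r \<bullet> test_dir = hess_quad + 2 * \<beta> * (\<Sum>i\<in>UNIV. y$i * u$i * test_dir$i)"
    by (simp add: r_def inner_add_left)
  have "hess *v y = hess *v h"
    by (simp add: h_def matrix_vector_mult_diff_distrib hess_mult_z)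
  then have "y \<bullet> (hess *v h) = hess_quad"
    using hess_self_adjoint[of y h] by (simp add: hess_quad_def inner_commute)
  moreover have "y \<bullet> (\<chi> i. y$i * u$i) = u_wmean"
    by (simp add: inner_vec_def u_wmean_def power2_eq_square mult.assoc)
  ultimately have y_r: "y \<bullet> r = hess_quad + 2 * \<beta> * u_wmean"
    by (simp add: r_def inner_add_right)
  have sum_eq: "(\<Sum>i\<in>UNIV. 2 * y$i * test_dir$i * (u$i - u_wmean))
      = 2 * (\<Sum>i\<in>UNIV. y$i * u$i * test_dir$i) - 2 * u_wmean * (y \<bullet> test_dir)"
    by (simp add: inner_vec_def sum_subtractf sum_distrib_left algebra_simps)
  show ?thesis
    unfolding sum_eq by (simp add: grad r_test y_r algebra_simps)
qed

definition coord_err :: "'n \<Rightarrow> real" where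
  "coord_err i = (if z$i = 0 then h$i * h_perp$i * u$i else (h$i)^2 * (u$i - u_wmean))"

lemma test_dir_sum_eq:
  "(\<Sum>i\<in>UNIV. 2 * y$i * test_dir$i * (u$i - u_wmean))
     = norm u ^ 2 + (\<Sum>i\<in>UNIV. coord_err i) - u_wmean * (h \<bullet> h_perp)"
proof -
  have coord: "2 * y$i * test_dir$i * (u$i - u_wmean)
      = (u$i)^2 - u_wmean * u$i + coord_err i - u_wmean * (h$i * h_perp$i)" for i
  proof (cases "z$i = 0")
    case True
    then show ?thesis
      by (simp add: coord_err_def test_dir_def h_perp_def h_off_def u_def y_nth
          algebra_simps power2_eq_square)
  next
    case False
    then show ?thesis
      by (simp add: coord_err_def test_dir_def h_perp_def h_off_def h_ker_nth u_def y_nth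
          algebra_simps power2_eq_square)
  qed
  have "(\<Sum>i\<in>UNIV. 2 * y$i * test_dir$i * (u$i - u_wmean))
      = (\<Sum>i\<in>UNIV. (u$i)^2) - u_wmean * (\<Sum>i\<in>UNIV. u$i) + (\<Sum>i\<in>UNIV. coord_err i)
        - u_wmean * (\<Sum>i\<in>UNIV. h$i * h_perp$i)"
    by (simp only: coord sum.distrib sum_subtractf sum_distrib_left)
  then show ?thesis
    by (simp add: sum_u inner_vec_def norm_power2_eq_sum_cart)
qed

lemma abs_coord_err_le: "\<bar>coord_err i\<bar> \<le> \<delta> * (4 / zmin^2 + 1/2) * ((u$i)^2 + (h_perp$i)^2)"
proof -
  have nonneg: "0 \<le> \<delta> * (4 / zmin^2) * (u$i)^2" "0 \<le> \<delta> / 2 * ((u$i)^2 + (h_perp$i)^2)"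
    using delta_pos by simp_all
  have "\<bar>coord_err i\<bar> \<le> \<delta> * (4 / zmin^2) * (u$i)^2 + \<delta> / 2 * ((u$i)^2 + (h_perp$i)^2)"
  proof (cases "z$i = 0")
    case True
    have "\<bar>coord_err i\<bar> = \<bar>h$i\<bar> * (\<bar>h_perp$i\<bar> * \<bar>u$i\<bar>)"
      using True by (simp add: coord_err_def abs_mult)
    also have "\<dots> \<le> \<delta> * (\<bar>h_perp$i\<bar> * \<bar>u$i\<bar>)"
      using abs_h_nth_less[of i] by (intro mult_right_mono) auto
    also have "\<dots> \<le> \<delta> / 2 * ((u$i)^2 + (h_perp$i)^2)"
      using mult_left_mono[OF sum_squares_bound[of "\<bar>h_perp$i\<bar>" "\<bar>u$i\<bar>"], of \<delta>] delta_pos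
      by (simp add: algebra_simps)
    finally show ?thesis
      using nonneg by linarith
  next
    case False
    have "zmin^2 * (h$i)^2 \<le> (u$i)^2"
      using power_mono[OF zmin_abs_h_nth_le[OF False], of 2] zmin_pos by (simp add: power_mult_distrib)
    then have h_sq: "(h$i)^2 \<le> (u$i)^2 / zmin^2"
      using zmin_pos by (simp add: pos_le_divide_eq mult.commute)
    have "\<bar>u$i - u_wmean\<bar> \<le> 4 * \<delta>"
      using abs_triangle_ineq4[of "u$i" u_wmean] abs_u_nth_le[of i] abs_h_nth_less[of i]
        abs_u_wmean_le norm_u_le norm_h_less by linarith
    then have "(h$i)^2 * \<bar>u$i - u_wmean\<bar> \<le> (u$i)^2 / zmin^2 * (4 * \<delta>)"
      using h_sq by (intro mult_mono) auto
    then have "\<bar>coord_err i\<bar> \<le> (u$i)^2 / zmin^2 * (4 * \<delta>)"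
      using False by (simp add: coord_err_def abs_mult)
    also have "\<dots> = \<delta> * (4 / zmin^2) * (u$i)^2"
      by simp
    finally show ?thesis
      using nonneg by linarith
  qed
  also have "\<dots> \<le> \<delta> * (4 / zmin^2 + 1/2) * ((u$i)^2 + (h_perp$i)^2)"
    using delta_pos zmin_pos by (simp add: algebra_simps)
  finally show ?thesis .
qed

lemma test_dir_sum_ge:
  "norm u ^ 2 - \<delta> * (4 / zmin^2 + 1) * (norm u ^ 2 + norm h_perp ^ 2)
     \<le> (\<Sum>i\<in>UNIV. 2 * y$i * test_dir$i * (u$i - u_wmean))"
proof -
  have "\<bar>\<Sum>i\<in>UNIV. coord_err i\<bar> \<le> (\<Sum>i\<in>UNIV. \<delta> * (4 / zmin^2 + 1/2) * ((u$i)^2 + (h_perp$i)^2))"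
    by (rule order_trans[OF sum_abs sum_mono[OF abs_coord_err_le]])
  also have "\<dots> = \<delta> * (4 / zmin^2 + 1/2) * (norm u ^ 2 + norm h_perp ^ 2)"
    by (simp add: norm_power2_eq_sum_cart sum.distrib flip: sum_distrib_left)
  finally have err: "\<bar>\<Sum>i\<in>UNIV. coord_err i\<bar> \<le> \<delta> * (4 / zmin^2 + 1/2) * (norm u ^ 2 + norm h_perp ^ 2)" .
  have "\<bar>h \<bullet> h_perp\<bar> \<le> \<delta> * norm h_perp"
    using Cauchy_Schwarz_ineq2[of h h_perp] mult_right_mono[OF less_imp_le[OF norm_h_less], of "norm h_perp"]
    by simp
  then have "\<bar>u_wmean * (h \<bullet> h_perp)\<bar> \<le> norm u * (\<delta> * norm h_perp)"
    unfolding abs_mult using abs_u_wmean_le by (intro mult_mono) auto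
  also have "\<dots> \<le> \<delta> / 2 * (norm u ^ 2 + norm h_perp ^ 2)"
    using mult_left_mono[OF sum_squares_bound[of "norm u" "norm h_perp"], of \<delta>] delta_pos
    by (simp add: algebra_simps)
  finally have mean: "\<bar>u_wmean * (h \<bullet> h_perp)\<bar> \<le> \<delta> / 2 * (norm u ^ 2 + norm h_perp ^ 2)" .
  have "\<delta> * (4 / zmin^2 + 1) * (norm u ^ 2 + norm h_perp ^ 2)
      = \<delta> * (4 / zmin^2 + 1/2) * (norm u ^ 2 + norm h_perp ^ 2) + \<delta> / 2 * (norm u ^ 2 + norm h_perp ^ 2)"
    by (simp add: algebra_simps)
  then show ?thesis
    unfolding test_dir_sum_eq using err mean by linarith
qed

lemma test_dir_sum_ge_err_const:
  "norm u ^ 2 - \<delta> * err_const * (hess_quad + norm u ^ 2)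
     \<le> (\<Sum>i\<in>UNIV. 2 * y$i * test_dir$i * (u$i - u_wmean))"
proof -
  define K where "K = 4 / zmin^2 + 1"
  define a1 where "a1 = 2 * hess_norm / hess_lower^2"
  define a2 where "a2 = 2 * hess_norm^2 / (hess_lower * zmin)^2"
  have K: "K \<ge> 0" and a1: "a1 \<ge> 0" and a2: "a2 \<ge> 0"
    using zmin_pos hess_norm_nonneg by (simp_all add: K_def a1_def a2_def)
  have "K * (norm u ^ 2 + norm h_perp ^ 2) \<le> K * (norm u ^ 2 + (a1 * hess_quad + a2 * norm u ^ 2))"
    using norm_h_perp_power2_le K unfolding a1_def a2_def by (intro mult_left_mono) auto
  also have "\<dots> \<le> err_const * (hess_quad + norm u ^ 2)"
    using K a1 a2 hess_nonneg[of h]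
    unfolding err_const_def K_def[symmetric] a1_def[symmetric] a2_def[symmetric] hess_quad_def
    by (simp add: algebra_simps)
  finally have "\<delta> * K * (norm u ^ 2 + norm h_perp ^ 2) \<le> \<delta> * err_const * (hess_quad + norm u ^ 2)"
    using mult_left_mono[OF _ less_imp_le[OF delta_pos]] by (simp add: mult.assoc)
  then show ?thesis
    using test_dir_sum_ge[folded K_def] by linarith
qed

lemma delta_err_const_le:
  "2 * \<delta> + \<beta> * (\<delta> * err_const) \<le> 1/2" "\<delta> * err_const \<le> 1/2"
proof -
  have "0 \<le> \<delta> * err_const" "0 \<le> \<beta> * (\<delta> * err_const)"
    using delta_pos err_const_nonneg beta_pos by simp_all
  moreover have "\<delta> * (2 + (1 + \<beta>) * err_const) = 2 * \<delta> + \<delta> * err_const + \<beta> * (\<delta> * err_const)"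
    by (simp add: algebra_simps)
  ultimately show "2 * \<delta> + \<beta> * (\<delta> * err_const) \<le> 1/2" "\<delta> * err_const \<le> 1/2"
    using delta_small delta_pos by linarith+
qed

lemma quartic_gap_le_riem_grad_inner:
  "quartic_obj A \<beta> y - quartic_obj A \<beta> z \<le> riem_grad A \<beta> y \<bullet> test_dir"
proof -
  define X where "X = (\<Sum>i\<in>UNIV. 2 * y$i * test_dir$i * (u$i - u_wmean))"
  have Q: "0 \<le> hess_quad"
    by (simp add: hess_quad_def hess_nonneg)
  have "\<bar>y \<bullet> test_dir\<bar> \<le> 2 * \<delta>"
    using Cauchy_Schwarz_ineq2[of y test_dir] y_sphere norm_test_dir_le norm_h_less
    by (simp add: unit_sphere_def)
  then have "hess_quad * (1 - 2 * \<delta>) \<le> hess_quad * (1 - y \<bullet> test_dir)"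
    using Q by (intro mult_left_mono) auto
  moreover have "\<beta> * (norm u ^ 2 - \<delta> * err_const * (hess_quad + norm u ^ 2)) \<le> \<beta> * X"
    using test_dir_sum_ge_err_const beta_pos unfolding X_def by (intro mult_left_mono) auto
  moreover have "0 \<le> hess_quad * (1/2 - 2 * \<delta> - \<beta> * (\<delta> * err_const))"
    using delta_err_const_le(1) Q by simp
  moreover have "0 \<le> \<beta> * norm u ^ 2 * (1/2 - \<delta> * err_const)"
    using delta_err_const_le(2) beta_pos by simp
  moreover have "hess_quad * (1 - 2 * \<delta>) + \<beta> * (norm u ^ 2 - \<delta> * err_const * (hess_quad + norm u ^ 2))
      = hess_quad / 2 + \<beta> / 2 * norm u ^ 2 + hess_quad * (1/2 - 2 * \<delta> - \<beta> * (\<delta> * err_const))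
        + \<beta> * norm u ^ 2 * (1/2 - \<delta> * err_const)"
    by (simp add: field_simps)
  ultimately show ?thesis
    unfolding quartic_gap_eq riem_grad_inner_test_dir X_def[symmetric] by linarith
qed

lemma quartic_gap_le: "quartic_obj A \<beta> y - quartic_obj A \<beta> z \<le> 2 * norm h * norm (riem_grad A \<beta> y)"
proof -
  have "riem_grad A \<beta> y \<bullet> test_dir \<le> norm (riem_grad A \<beta> y) * norm test_dir"
    by (rule norm_cauchy_schwarz)
  also have "\<dots> \<le> norm (riem_grad A \<beta> y) * (2 * norm h)"
    using norm_test_dir_le by (intro mult_left_mono) auto
  finally show ?thesis
    using quartic_gap_le_riem_grad_inner by (simp add: algebra_simps)
qed


lemma abs_quartic_gap_powr_le:
  "\<bar>quartic_obj A \<beta> y - quartic_obj A \<beta> z\<bar> powr (3/4)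
     \<le> (32 * real CARD('n) / \<beta>) powr (1/4) * norm (riem_grad A \<beta> y)"
proof -
  have gap: "\<beta> / 2 * norm u ^ 2 \<le> quartic_obj A \<beta> y - quartic_obj A \<beta> z"
    using quartic_gap_eq hess_nonneg[of h] by (simp add: hess_quad_def)
  have "(2 * norm h) ^ 4 = 16 * norm h ^ 4"
    by simp
  also have "\<dots> \<le> 16 * (CARD('n) * norm u ^ 2)"
    using norm_h_power4_le by simp
  also have "\<dots> = (32 * real CARD('n) / \<beta>) * (\<beta> / 2 * norm u ^ 2)"
    using beta_pos by simp
  also have "\<dots> \<le> (32 * real CARD('n) / \<beta>) * (quartic_obj A \<beta> y - quartic_obj A \<beta> z)"
    using gap beta_pos by (intro mult_left_mono) simp_all
  finally have pow4: "(2 * norm h) ^ 4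
      \<le> (32 * real CARD('n) / \<beta>) * (quartic_obj A \<beta> y - quartic_obj A \<beta> z)" .
  have "0 \<le> \<beta> / 2 * norm u ^ 2"
    using beta_pos by simp
  then have "0 \<le> quartic_obj A \<beta> y - quartic_obj A \<beta> z"
    using gap by linarith
  then show ?thesis
    using powr_three_quarters_le[OF _ norm_ge_zero quartic_gap_le pow4] by simp
qed

end

theorem theorem16:
  fixes A :: "real^'n^'n" and \<beta> lam :: real and z :: "real^'n"
  assumes symA: "transpose A = A"
    and beta_pos: "\<beta> > 0"
    and z_sphere: "z \<in> unit_sphere"
    and stat: "(A + (2 * \<beta>) *\<^sub>R diag_sq z) *v z = (2 * lam) *\<^sub>R z"
    and lam_def: "2 * lam = z \<bullet> (A *v z) + 2 * \<beta> * (\<Sum>k\<in>UNIV. (z $ k)^4)"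
    and H_psd: "psd (A + (2 * \<beta>) *\<^sub>R diag_sq z - (2 * lam) *\<^sub>R mat 1)"
  shows "\<exists>\<delta> > 0. \<exists>\<eta> > 0. \<forall>y \<in> unit_sphere. norm (y - z) < \<delta> \<longrightarrow>
           \<bar>quartic_obj A \<beta> y - quartic_obj A \<beta> z\<bar> powr (3/4)
             \<le> \<eta> * norm (riem_grad A \<beta> y)"
proof -
  interpret quartic_stationary A \<beta> lam z
    using symA beta_pos z_sphere stat H_psd by unfold_locales
  obtain \<delta> where "\<delta> > 0" "\<delta> \<le> zmin / 2" "\<delta> * (2 + (1 + \<beta>) * err_const) \<le> 1 / 2"
    by (rule exists_nbhd_radius)
  have "\<bar>quartic_obj A \<beta> y - quartic_obj A \<beta> z\<bar> powr (3/4)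
      \<le> (32 * real CARD('n) / \<beta>) powr (1/4) * norm (riem_grad A \<beta> y)"
    if "y \<in> unit_sphere" "norm (y - z) < \<delta>" for y
  proof -
    interpret quartic_stationary_nbhd A \<beta> lam z \<delta> y
      using that \<open>\<delta> \<le> zmin / 2\<close> \<open>\<delta> * (2 + (1 + \<beta>) * err_const) \<le> 1 / 2\<close>
      by unfold_locales
    show ?thesis
      by (rule abs_quartic_gap_powr_le)
  qed
  moreover have "(32 * real CARD('n) / \<beta>) powr (1/4) > 0"
    using beta_pos by simp
  ultimately show ?thesis
    using \<open>\<delta> > 0\<close> by blast
qed

end
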